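(* Fix $x\in\mathcal{X}$ and let $\rho=\operatorname{cor}\big(Y(0),Y(1)\mid X=x\big)\in[-1,1]$. Assume that $\big(Y(1),Y(0)\big)\mid X=x$ is (bivariate) Gaussian, that $\hat\mu_t(x)=\mu_t(x)$ for $t=0,1$, and that the nonnegative numbers $l_t(x),u_t(x)$ satisfy, for $t=0,1$, \[ \mathbb{P}\big(Y(t)\le \hat\mu_t(x)+u_t(x)\mid X=x\big)=0.95,\qquad \mathbb{P}\big(Y(t)\ge \hat\mu_t(x)-l_t(x)\mid X=x\big)=0.95 . \] Let $\hat\tau(x)=\hat\mu_1(x)-\hat\mu_0(x)$ and define the $CW(\rho)$ interval \[ C_{ITE}(x)=\Big[\hat\tau(x)-D_\rho\big(l_1(x),u_0(x)\big),\ \hat\tau(x)+D_\rho\big(l_0(x),u_1(x)\big)\Big]. \] Then $C_{ITE}$ is optimal in the sense that it is the smallest set satisfying \[ \mathbb{P}\big(Y(1)-Y(0)\in C_{ITE}(X)\mid X=x\big)=0.9 . \]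
   Context: Potential outcomes framework: $(Y(1),Y(0),T,X)$ is a random vector with covariates $X\in\mathcal{X}\subseteq\mathbb{R}^d$ and potential outcomes $Y(1),Y(0)\in\mathbb{R}$. Write $\mu_t(x)=\mathbb{E}[Y(t)\mid X=x]$, $t=0,1$; $\hat\mu_t$ denotes an estimate of $\mu_t$. For $\rho\in[-1,1]$ and $a,b\ge 0$, the correlation-adjusted Euclidean distance is $D_\rho(a,b)=\sqrt{a^2+b^2-2\rho ab}$. *)

theory Defs
  imports "HOL-Probability.Probability"
begin

definition D_rho :: "real \<Rightarrow> real \<Rightarrow> real \<Rightarrow> real" where
  "D_rho \<rho> a b = sqrt (a\<^sup>2 + b\<^sup>2 - 2 * \<rho> * a * b)"

definition gaussian_rv :: "'a measure \<Rightarrow> ('a \<Rightarrow> real) \<Rightarrow> bool" where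
  "gaussian_rv M Z \<longleftrightarrow> Z \<in> borel_measurable M \<and>
     (\<exists>\<mu> \<sigma>. (\<sigma> > 0 \<and> distributed M lborel Z (normal_density \<mu> \<sigma>))
           \<or> distr M borel Z = return borel \<mu>)"

definition jointly_gaussian :: "'a measure \<Rightarrow> ('a \<Rightarrow> real) \<Rightarrow> ('a \<Rightarrow> real) \<Rightarrow> bool" where
  "jointly_gaussian M X Y \<longleftrightarrow> (\<forall>a b. gaussian_rv M (\<lambda>\<omega>. a * X \<omega> + b * Y \<omega>))"

definition variance_of :: "'a measure \<Rightarrow> ('a \<Rightarrow> real) \<Rightarrow> real" where
  "variance_of M X = (LINT \<omega>|M. (X \<omega> - (LINT \<omega>'|M. X \<omega>'))\<^sup>2)"

definition covariance_of :: "'a measure \<Rightarrow> ('a \<Rightarrow> real) \<Rightarrow> ('a \<Rightarrow> real) \<Rightarrow> real" where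
  "covariance_of M X Y =
     (LINT \<omega>|M. (X \<omega> - (LINT \<omega>'|M. X \<omega>')) * (Y \<omega> - (LINT \<omega>'|M. Y \<omega>')))"

definition correlation_of :: "'a measure \<Rightarrow> ('a \<Rightarrow> real) \<Rightarrow> ('a \<Rightarrow> real) \<Rightarrow> real" where
  "correlation_of M X Y =
     covariance_of M X Y / (sqrt (variance_of M X) * sqrt (variance_of M Y))"

definition C_ITE :: "real \<Rightarrow> real \<Rightarrow> real \<Rightarrow> real \<Rightarrow> real \<Rightarrow> real \<Rightarrow> real \<Rightarrow> real set" where
  "C_ITE \<rho> mu1hat mu0hat l0 u0 l1 u1 =
     {(mu1hat - mu0hat) - D_rho \<rho> l1 u0 .. (mu1hat - mu0hat) + D_rho \<rho> l0 u1}"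

end

theory Submission
  imports Defs
begin

(* Gaussianity and the four 0.95-quantile conditions force u_t = l_t = z * sigma_t, where
   sigma_t is the standard deviation of Y(t) and Phi(z) = 0.95.  The difference Y(1) - Y(0) is
   normal with mean mu_1 - mu_0 and standard deviation D_rho(sigma_1, sigma_0), so the CW(rho)
   interval is the symmetric interval of radius z * D_rho(sigma_1, sigma_0) around the mean and
   has coverage 2 Phi(z) - 1 = 0.9.  That interval is an upper level set {f >= c} of the normal
   density f: a Borel set B of the same probability gains from B - C exactly the mass it loses on
   C - B, at density below c instead of at least c, so it needs at least as much Lebesgue measure,
   and equal measure forces B and C to agree up to a null set. *)

lemma emeasure_Int_add_Diff:
  assumes "A \<in> sets M" "B \<in> sets M"
  shows "emeasure M A = emeasure M (A \<inter> B) + emeasure M (A - B)"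
  by (metis Int_Diff_Un Int_Diff_disjoint assms plus_emeasure sets.Diff sets.Int)

lemma emeasure_Diff_eq_swap:
  assumes [measurable]: "A \<in> sets M" "B \<in> sets M"
    and "emeasure M A = emeasure M B" "emeasure M B \<noteq> \<infinity>"
  shows "emeasure M (A - B) = emeasure M (B - A)"
proof -
  have "emeasure M (A \<inter> B) \<noteq> \<infinity>"
    using emeasure_mono[of "A \<inter> B" B M] assms(4) by (auto simp: top_unique)
  then show ?thesis
    using emeasure_Int_add_Diff[of A M B] emeasure_Int_add_Diff[of B M A] assms(3)
    by (simp add: Int_commute ennreal_add_left_cancel)
qed

lemma emeasure_density_mono:
  assumes [measurable]: "f \<in> borel_measurable M" "g \<in> borel_measurable M" "A \<in> sets M"
    and "\<And>x. x \<in> A \<Longrightarrow> f x \<le> g x"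
  shows "emeasure (density M f) A \<le> emeasure (density M g) A"
  unfolding emeasure_density[OF assms(1,3)] emeasure_density[OF assms(2,3)]
  using assms(4) by (intro nn_integral_mono) (auto simp: indicator_def)

lemma emeasure_density_strict_mono:
  assumes [measurable]: "f \<in> borel_measurable M" "g \<in> borel_measurable M" "A \<in> sets M"
    and less: "\<And>x. x \<in> A \<Longrightarrow> f x < g x"
    and "emeasure (density M f) A \<noteq> \<infinity>" "emeasure M A \<noteq> 0"
  shows "emeasure (density M f) A < emeasure (density M g) A"
  unfolding emeasure_density[OF assms(1,3)] emeasure_density[OF assms(2,3)]
proof (rule nn_integral_less)
  show "(\<integral>\<^sup>+x. f x * indicator A x \<partial>M) \<noteq> \<infinity>"
    using assms(5) by (simp add: emeasure_density)
  show "AE x in M. f x * indicator A x \<le> g x * indicator A x"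
    using less by (auto simp: indicator_def less_imp_le)
  show "\<not> (AE x in M. g x * indicator A x \<le> f x * indicator A x)"
  proof
    assume "AE x in M. g x * indicator A x \<le> f x * indicator A x"
    then have "AE x in M. x \<notin> A"
      by eventually_elim (use less in \<open>force simp: indicator_def\<close>)
    then show False
      using AE_iff_measurable[of A M "\<lambda>x. x \<notin> A"] assms(3,6) sets.sets_into_space by blast
  qed
qed simp_all

lemma upper_level_set_minimal_measure:
  fixes M :: "'a measure" and f :: "'a \<Rightarrow> real" and c :: real
  defines "C \<equiv> {x \<in> space M. c \<le> f x}"
  assumes [measurable]: "f \<in> borel_measurable M" "B \<in> sets M"
    and "c > 0"
    and same_mass: "emeasure (density M f) B = emeasure (density M f) C"
    and finite_mass: "emeasure (density M f) C \<noteq> \<infinity>"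
  shows "emeasure M C \<le> emeasure M B"
    and "emeasure M B = emeasure M C \<Longrightarrow> emeasure M ((B - C) \<union> (C - B)) = 0"
proof -
  let ?N = "density M f"
  have [measurable]: "C \<in> sets M" unfolding C_def by measurable
  have below: "ennreal c * emeasure M A \<le> emeasure ?N A" if [measurable]: "A \<in> sets M" "A \<subseteq> C" for A
    using emeasure_density_mono[of "\<lambda>_. ennreal c" M "\<lambda>x. ennreal (f x)" A] that
    by (auto simp: emeasure_density_const C_def intro: ennreal_leI)
  have off_C: "ennreal (f x) < ennreal c" if "x \<in> A" "A \<in> sets M" "A \<inter> C = {}" for x A
  proof -
    have "x \<in> space M" using that sets.sets_into_space by blast
    with that have "f x < c" by (auto simp: C_def)
    then show ?thesis using \<open>c > 0\<close> by (intro ennreal_lessI)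
  qed
  have above: "emeasure ?N A \<le> ennreal c * emeasure M A" if [measurable]: "A \<in> sets M" "A \<inter> C = {}" for A
    using emeasure_density_mono[of "\<lambda>x. ennreal (f x)" M "\<lambda>_. ennreal c" A] off_C[OF _ that]
    by (auto simp: emeasure_density_const less_imp_le)
  have strictly_above: "emeasure ?N A < ennreal c * emeasure M A"
    if [measurable]: "A \<in> sets M" "A \<inter> C = {}" "emeasure M A \<noteq> 0" "emeasure ?N A \<noteq> \<infinity>" for A
    using emeasure_density_strict_mono[of "\<lambda>x. ennreal (f x)" M "\<lambda>_. ennreal c" A] off_C[OF _ that(1,2)] that
    by (auto simp: emeasure_density_const)
  have swap_N: "emeasure ?N (B - C) = emeasure ?N (C - B)"
    using same_mass finite_mass by (intro emeasure_Diff_eq_swap) auto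
  have "ennreal c * emeasure M (C - B) \<le> emeasure ?N (C - B)"
    by (rule below) auto
  also have "\<dots> = emeasure ?N (B - C)"
    by (rule swap_N[symmetric])
  also have "\<dots> \<le> ennreal c * emeasure M (B - C)"
    by (rule above) auto
  finally have C_minus_B_le: "emeasure M (C - B) \<le> emeasure M (B - C)"
    using \<open>c > 0\<close> by (simp add: ennreal_mult_le_mult_iff)
  show "emeasure M C \<le> emeasure M B"
    using emeasure_Int_add_Diff[of C M B] emeasure_Int_add_Diff[of B M C] C_minus_B_le
    by (simp add: Int_commute add_left_mono)
  assume same_measure: "emeasure M B = emeasure M C"
  have "ennreal c * emeasure M C \<noteq> \<infinity>"
    using below[of C] finite_mass by (auto simp: top_unique)
  then have "emeasure M C \<noteq> \<infinity>"
    using \<open>c > 0\<close> by (simp add: ennreal_mult_eq_top_iff)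
  then have swap_M: "emeasure M (B - C) = emeasure M (C - B)"
    by (intro emeasure_Diff_eq_swap) (auto simp: same_measure)
  have "emeasure ?N (B - C) \<noteq> \<infinity>"
    using emeasure_mono[of "C - B" C ?N] finite_mass swap_N by (auto simp: top_unique)
  have "emeasure M (B - C) = 0"
  proof (rule ccontr)
    assume "emeasure M (B - C) \<noteq> 0"
    then have "emeasure ?N (B - C) < ennreal c * emeasure M (B - C)"
      using \<open>emeasure ?N (B - C) \<noteq> \<infinity>\<close> by (intro strictly_above) auto
    also have "\<dots> = ennreal c * emeasure M (C - B)"
      by (simp add: swap_M)
    also have "\<dots> \<le> emeasure ?N (C - B)"
      by (rule below) auto
    finally show False
      by (simp add: swap_N)
  qed
  then show "emeasure M ((B - C) \<union> (C - B)) = 0"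
    using swap_M emeasure_subadditive[of "B - C" M "C - B"] by simp
qed

lemma normal_density_le_iff:
  assumes "\<sigma> > 0"
  shows "normal_density \<mu> \<sigma> (\<mu> + r) \<le> normal_density \<mu> \<sigma> x \<longleftrightarrow> \<bar>x - \<mu>\<bar> \<le> \<bar>r\<bar>"
proof -
  have "\<not> pi * \<sigma>\<^sup>2 < 0"
    by (simp add: not_less)
  then have "normal_density \<mu> \<sigma> (\<mu> + r) \<le> normal_density \<mu> \<sigma> x \<longleftrightarrow> (x - \<mu>)\<^sup>2 \<le> r\<^sup>2"
    using assms by (simp add: normal_density_def divide_le_cancel)
  then show ?thesis
    by (simp add: abs_le_square_iff)
qed

lemma (in prob_space) distributed_prob_eq_measure_density:
  assumes "distributed M N X f" "A \<in> sets N"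
  shows "prob {\<omega> \<in> space M. X \<omega> \<in> A} = measure (density N f) A"
proof -
  have "{\<omega> \<in> space M. X \<omega> \<in> A} = X -` A \<inter> space M" by auto
  then show ?thesis
    using assms measure_distr[OF distributed_measurable[OF assms(1)] assms(2)]
    by (simp add: distributed_distr_eq_density)
qed

lemma (in prob_space) normal_distributed_symmetric_interval_minimal_measure:
  fixes \<mu> \<sigma> z :: real
  defines "C \<equiv> {\<mu> - z * \<sigma> .. \<mu> + z * \<sigma>}"
  assumes "\<sigma> > 0" "z \<ge> 0" and X: "distributed M lborel X (normal_density \<mu> \<sigma>)"
    and [measurable]: "B \<in> sets borel"
    and same_prob: "prob {\<omega> \<in> space M. X \<omega> \<in> B} = prob {\<omega> \<in> space M. X \<omega> \<in> C}"
  shows "emeasure lborel C \<le> emeasure lborel B"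
    and "emeasure lborel B = emeasure lborel C \<Longrightarrow> emeasure lborel ((B - C) \<union> (C - B)) = 0"
proof -
  let ?N = "density lborel (normal_density \<mu> \<sigma>)"
  interpret N: prob_space ?N
    using \<open>\<sigma> > 0\<close> by (rule prob_space_normal_density)
  have level_set: "C = {x \<in> space lborel. normal_density \<mu> \<sigma> (\<mu> + z * \<sigma>) \<le> normal_density \<mu> \<sigma> x}"
    using assms(2,3) by (auto simp: C_def normal_density_le_iff abs_le_iff)
  have [measurable]: "C \<in> sets borel"
    by (simp add: C_def)
  have "emeasure ?N B = emeasure ?N C"
    using same_prob distributed_prob_eq_measure_density[OF X, of B] distributed_prob_eq_measure_density[OF X, of C]
    by (simp add: N.emeasure_eq_measure)
  note minimal = upper_level_set_minimal_measure[where M = lborel and f = "normal_density \<mu> \<sigma>"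
      and c = "normal_density \<mu> \<sigma> (\<mu> + z * \<sigma>)", folded level_set]
  show "emeasure lborel C \<le> emeasure lborel B"
    using minimal(1) \<open>emeasure ?N B = emeasure ?N C\<close> \<open>\<sigma> > 0\<close> by (simp add: normal_density_pos)
  show "emeasure lborel B = emeasure lborel C \<Longrightarrow> emeasure lborel ((B - C) \<union> (C - B)) = 0"
    using minimal(2) \<open>emeasure ?N B = emeasure ?N C\<close> \<open>\<sigma> > 0\<close> by (simp add: normal_density_pos)
qed

definition std_normal_cdf :: "real \<Rightarrow> real" where
  "std_normal_cdf = cdf (density lborel std_normal_density)"

lemma strict_mono_std_normal_cdf: "strict_mono std_normal_cdf"
proof (rule strict_monoI)
  fix a b :: real
  assume "a < b"
  let ?N = "density lborel std_normal_density"
  interpret N: real_distribution ?N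
    by (simp add: real_distribution_def real_distribution_axioms_def prob_space_normal_density)
  have "emeasure (density lborel (\<lambda>_. 0)) {a<..b} < emeasure ?N {a<..b}"
    using \<open>a < b\<close> by (intro emeasure_density_strict_mono) (auto simp: normal_density_pos emeasure_density_const)
  then have "0 < measure ?N {a<..b}"
    by (simp add: emeasure_density_const N.emeasure_eq_measure)
  then show "std_normal_cdf a < std_normal_cdf b"
    using N.cdf_diff_eq[OF \<open>a < b\<close>] by (simp add: std_normal_cdf_def)
qed

lemma (in prob_space) normal_distributed_prob_le:
  assumes "\<sigma> > 0" "distributed M lborel X (normal_density \<mu> \<sigma>)"
  shows "prob {\<omega> \<in> space M. X \<omega> \<le> \<mu> + t * \<sigma>} = std_normal_cdf t"
proof -
  have std: "distributed M lborel (\<lambda>\<omega>. (X \<omega> - \<mu>) / \<sigma>) std_normal_density"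
    using assms normal_standard_normal_convert by blast
  have "{\<omega> \<in> space M. X \<omega> \<le> \<mu> + t * \<sigma>} = {\<omega> \<in> space M. (X \<omega> - \<mu>) / \<sigma> \<in> {..t}}"
    using \<open>\<sigma> > 0\<close> by (auto simp: pos_divide_le_eq)
  then show ?thesis
    using distributed_prob_eq_measure_density[OF std, of "{..t}"] by (simp add: std_normal_cdf_def cdf_def)
qed

lemma (in prob_space) normal_distributed_prob_ge:
  assumes "\<sigma> > 0" "distributed M lborel X (normal_density \<mu> \<sigma>)"
  shows "prob {\<omega> \<in> space M. \<mu> - t * \<sigma> \<le> X \<omega>} = std_normal_cdf t"
proof -
  have "distributed M lborel (\<lambda>\<omega>. 0 + (-1) * X \<omega>) (normal_density (0 + (-1) * \<mu>) (\<bar>-1\<bar> * \<sigma>))"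
    using assms by (intro normal_density_affine) auto
  then have "prob {\<omega> \<in> space M. - X \<omega> \<le> - \<mu> + t * \<sigma>} = std_normal_cdf t"
    using \<open>\<sigma> > 0\<close> by (intro normal_distributed_prob_le) auto
  then show ?thesis
    by (simp add: algebra_simps)
qed

lemma (in prob_space) normal_distributed_symmetric_interval_prob:
  assumes "\<sigma> > 0" "z \<ge> 0" and X: "distributed M lborel X (normal_density \<mu> \<sigma>)"
  shows "prob {\<omega> \<in> space M. X \<omega> \<in> {\<mu> - z * \<sigma> .. \<mu> + z * \<sigma>}} = 2 * std_normal_cdf z - 1"
proof -
  define below where "below = {\<omega> \<in> space M. X \<omega> \<le> \<mu> + z * \<sigma>}"
  define above where "above = {\<omega> \<in> space M. \<mu> - z * \<sigma> \<le> X \<omega>}"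
  have [measurable]: "X \<in> borel_measurable M"
    using distributed_measurable[OF X] by simp
  have [measurable]: "below \<in> events" "above \<in> events"
    unfolding below_def above_def by measurable
  have "0 \<le> z * \<sigma>"
    using assms(1,2) by simp
  then have "below \<union> above = space M"
    by (auto simp: below_def above_def)
  moreover have "prob (below \<union> above) = prob below + prob above - prob (below \<inter> above)"
    by (rule measure_Un3) (simp_all add: fmeasurable_eq_sets)
  moreover have "{\<omega> \<in> space M. X \<omega> \<in> {\<mu> - z * \<sigma> .. \<mu> + z * \<sigma>}} = below \<inter> above"
    by (auto simp: below_def above_def)
  ultimately show ?thesis
    using normal_distributed_prob_le[OF assms(1) X, of z] normal_distributed_prob_ge[OF assms(1) X, of z]
    by (simp add: below_def above_def prob_space)
qed

lemma (in prob_space) normal_distributed_upper_quantile: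
  assumes "\<sigma> > 0" "distributed M lborel X (normal_density \<mu> \<sigma>)"
    and "prob {\<omega> \<in> space M. X \<omega> \<le> \<mu> + u} = std_normal_cdf z"
  shows "u = z * \<sigma>"
proof -
  have "std_normal_cdf (u / \<sigma>) = std_normal_cdf z"
    using normal_distributed_prob_le[OF assms(1,2), of "u / \<sigma>"] assms by simp
  then show ?thesis
    using strict_mono_std_normal_cdf \<open>\<sigma> > 0\<close> by (simp add: strict_mono_eq field_simps)
qed

lemma (in prob_space) normal_distributed_lower_quantile:
  assumes "\<sigma> > 0" "distributed M lborel X (normal_density \<mu> \<sigma>)"
    and "prob {\<omega> \<in> space M. \<mu> - l \<le> X \<omega>} = std_normal_cdf z"
  shows "l = z * \<sigma>"
proof -
  have "std_normal_cdf (l / \<sigma>) = std_normal_cdf z"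
    using normal_distributed_prob_ge[OF assms(1,2), of "l / \<sigma>"] assms by simp
  then show ?thesis
    using strict_mono_std_normal_cdf \<open>\<sigma> > 0\<close> by (simp add: strict_mono_eq field_simps)
qed

lemma (in prob_space) gaussian_rv_normal_if_nontrivial_prob:
  assumes "gaussian_rv M Z" "A \<in> sets borel"
    and "prob {\<omega> \<in> space M. Z \<omega> \<in> A} \<notin> {0, 1}"
  shows "\<exists>\<mu> \<sigma>. \<sigma> > 0 \<and> distributed M lborel Z (normal_density \<mu> \<sigma>)"
proof (rule ccontr)
  assume "\<not> ?thesis"
  with assms(1) obtain \<mu> where point_mass: "distr M borel Z = return borel \<mu>"
    and [measurable]: "Z \<in> borel_measurable M"
    unfolding gaussian_rv_def by auto
  have "{\<omega> \<in> space M. Z \<omega> \<in> A} = Z -` A \<inter> space M" by auto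
  then have "prob {\<omega> \<in> space M. Z \<omega> \<in> A} = measure (distr M borel Z) A"
    using assms(2) by (simp add: measure_distr)
  also have "\<dots> = indicator A \<mu>"
    using assms(2) by (simp add: point_mass measure_return)
  finally show False
    using assms(3) by (simp add: indicator_def split: if_splits)
qed

lemma (in prob_space) gaussian_rv_normal_if_variance_pos:
  assumes "gaussian_rv M Z" "variance_of M Z > 0"
  shows "\<exists>\<mu> \<sigma>. \<sigma> > 0 \<and> distributed M lborel Z (normal_density \<mu> \<sigma>)"
proof (rule ccontr)
  assume "\<not> ?thesis"
  with assms(1) obtain \<mu> where point_mass: "distr M borel Z = return borel \<mu>"
    and [measurable]: "Z \<in> borel_measurable M"
    unfolding gaussian_rv_def by auto
  have integral_Z: "(\<integral>\<omega>. g (Z \<omega>) \<partial>M) = g \<mu>"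
    if [measurable]: "g \<in> borel_measurable borel" for g :: "real \<Rightarrow> real"
  proof -
    have "(\<integral>\<omega>. g (Z \<omega>) \<partial>M) = (\<integral>x. g x \<partial>distr M borel Z)"
      by (rule integral_distr[symmetric]) simp_all
    then show ?thesis
      by (simp add: point_mass integral_return)
  qed
  have "variance_of M Z = 0"
    using integral_Z[of "\<lambda>x. x"] integral_Z[of "\<lambda>x. (x - \<mu>)\<^sup>2"]
    by (simp add: variance_of_def)
  with assms(2) show False by simp
qed

lemma (in prob_space) normal_distributed_square_integrable:
  assumes "\<sigma> > 0" and X: "distributed M lborel X (normal_density \<mu> \<sigma>)"
  shows "integrable M (\<lambda>\<omega>. (X \<omega>)\<^sup>2)"
proof -
  have "integrable lborel (\<lambda>x. normal_density \<mu> \<sigma> x * (x - \<mu>) ^ 2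
      + 2 * \<mu> * (normal_density \<mu> \<sigma> x * (x - \<mu>) ^ 1) + \<mu>\<^sup>2 * normal_density \<mu> \<sigma> x)"
    using assms(1) by (intro Bochner_Integration.integrable_add integrable_mult_right integrable_normal_moment) auto
  also have "(\<lambda>x. normal_density \<mu> \<sigma> x * (x - \<mu>) ^ 2
      + 2 * \<mu> * (normal_density \<mu> \<sigma> x * (x - \<mu>) ^ 1) + \<mu>\<^sup>2 * normal_density \<mu> \<sigma> x)
      = (\<lambda>x. normal_density \<mu> \<sigma> x * x\<^sup>2)"
    by (auto simp: power2_eq_square algebra_simps)
  finally show ?thesis
    using distributed_integrable[OF X, of "\<lambda>x. x\<^sup>2"] by simp
qed

lemma (in prob_space) integrable_centered_square:
  fixes X :: "'a \<Rightarrow> real"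
  assumes [measurable]: "X \<in> borel_measurable M" and "integrable M (\<lambda>\<omega>. (X \<omega>)\<^sup>2)"
  shows "integrable M (\<lambda>\<omega>. (X \<omega> - c)\<^sup>2)"
proof -
  have "integrable M X"
    using assms by (blast dest: square_integrable_imp_integrable)
  then show ?thesis
    using assms unfolding power2_eq_square ring_distribs
    by (intro Bochner_Integration.integrable_diff) auto
qed

lemma (in prob_space) variance_of_diff:
  fixes X Y :: "'a \<Rightarrow> real"
  assumes [measurable]: "X \<in> borel_measurable M" "Y \<in> borel_measurable M"
    and X2: "integrable M (\<lambda>\<omega>. (X \<omega>)\<^sup>2)" and Y2: "integrable M (\<lambda>\<omega>. (Y \<omega>)\<^sup>2)"
  shows "variance_of M (\<lambda>\<omega>. X \<omega> - Y \<omega>)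
    = variance_of M X + variance_of M Y - 2 * covariance_of M X Y"
proof -
  define a where "a \<omega> = X \<omega> - expectation X" for \<omega>
  define b where "b \<omega> = Y \<omega> - expectation Y" for \<omega>
  have "integrable M X" "integrable M Y"
    using assms by (blast dest: square_integrable_imp_integrable)+
  have a2: "integrable M (\<lambda>\<omega>. (a \<omega>)\<^sup>2)" and b2: "integrable M (\<lambda>\<omega>. (b \<omega>)\<^sup>2)"
    unfolding a_def b_def using X2 Y2 by (simp_all add: integrable_centered_square)
  have bound: "norm (a \<omega> * b \<omega>) \<le> norm ((a \<omega>)\<^sup>2 + (b \<omega>)\<^sup>2)" for \<omega>
  proof -
    have "2 * (\<bar>a \<omega>\<bar> * \<bar>b \<omega>\<bar>) \<le> (a \<omega>)\<^sup>2 + (b \<omega>)\<^sup>2"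
      using sum_squares_bound[of "\<bar>a \<omega>\<bar>" "\<bar>b \<omega>\<bar>"] by simp
    moreover have "0 \<le> \<bar>a \<omega>\<bar> * \<bar>b \<omega>\<bar>"
      by simp
    ultimately have "\<bar>a \<omega> * b \<omega>\<bar> \<le> (a \<omega>)\<^sup>2 + (b \<omega>)\<^sup>2"
      unfolding abs_mult by linarith
    then show ?thesis
      by simp
  qed
  have "(\<lambda>\<omega>. a \<omega> * b \<omega>) \<in> borel_measurable M"
    by (simp add: a_def b_def)
  with Bochner_Integration.integrable_add[OF a2 b2]
  have ab: "integrable M (\<lambda>\<omega>. a \<omega> * b \<omega>)"
    by (rule Bochner_Integration.integrable_bound) (rule AE_I2, rule bound)
  have mean_diff: "expectation (\<lambda>\<omega>. X \<omega> - Y \<omega>) = expectation X - expectation Y"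
    using \<open>integrable M X\<close> \<open>integrable M Y\<close> by simp
  have "(\<lambda>\<omega>. (X \<omega> - Y \<omega> - expectation (\<lambda>\<omega>. X \<omega> - Y \<omega>))\<^sup>2)
      = (\<lambda>\<omega>. (a \<omega>)\<^sup>2 + (b \<omega>)\<^sup>2 - 2 * (a \<omega> * b \<omega>))"
    unfolding mean_diff by (simp add: a_def b_def power2_eq_square algebra_simps)
  then have "variance_of M (\<lambda>\<omega>. X \<omega> - Y \<omega>)
      = expectation (\<lambda>\<omega>. (a \<omega>)\<^sup>2 + (b \<omega>)\<^sup>2 - 2 * (a \<omega> * b \<omega>))"
    by (simp add: variance_of_def)
  also have "\<dots> = variance_of M X + variance_of M Y - 2 * covariance_of M X Y"
    using a2 b2 ab by (simp add: variance_of_def covariance_of_def a_def b_def)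
  finally show ?thesis .
qed

lemma covariance_of_commute: "covariance_of M X Y = covariance_of M Y X"
  by (simp add: covariance_of_def mult.commute)

lemma (in prob_space) sqrt_variance_of_diff:
  fixes X Y :: "'a \<Rightarrow> real"
  assumes "X \<in> borel_measurable M" "Y \<in> borel_measurable M"
    and "integrable M (\<lambda>\<omega>. (X \<omega>)\<^sup>2)" "integrable M (\<lambda>\<omega>. (Y \<omega>)\<^sup>2)"
    and "variance_of M X > 0" "variance_of M Y > 0"
  shows "sqrt (variance_of M (\<lambda>\<omega>. X \<omega> - Y \<omega>))
    = D_rho (correlation_of M Y X) (sqrt (variance_of M X)) (sqrt (variance_of M Y))"
proof -
  have "correlation_of M Y X * sqrt (variance_of M X) * sqrt (variance_of M Y) = covariance_of M X Y"
    using assms(5,6) by (simp add: correlation_of_def covariance_of_commute)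
  then show ?thesis
    using variance_of_diff[OF assms(1-4)] assms(5,6) by (simp add: D_rho_def algebra_simps)
qed

lemma D_rho_commute: "D_rho \<rho> a b = D_rho \<rho> b a"
  by (simp add: D_rho_def algebra_simps)

lemma D_rho_scale:
  assumes "z \<ge> 0"
  shows "D_rho \<rho> (z * a) (z * b) = z * D_rho \<rho> a b"
proof -
  have "(z * a)\<^sup>2 + (z * b)\<^sup>2 - 2 * \<rho> * (z * a) * (z * b) = z\<^sup>2 * (a\<^sup>2 + b\<^sup>2 - 2 * \<rho> * a * b)"
    by (simp add: power2_eq_square algebra_simps)
  then show ?thesis
    using assms by (simp add: D_rho_def real_sqrt_mult)
qed

lemma C_ITE_eq_symmetric_interval:
  assumes "z \<ge> 0" "l1 = z * \<sigma>1" "u1 = z * \<sigma>1" "l0 = z * \<sigma>0" "u0 = z * \<sigma>0"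
  shows "C_ITE \<rho> mu1hat mu0hat l0 u0 l1 u1
    = {mu1hat - mu0hat - z * D_rho \<rho> \<sigma>1 \<sigma>0 .. mu1hat - mu0hat + z * D_rho \<rho> \<sigma>1 \<sigma>0}"
  using assms by (simp add: C_ITE_def D_rho_scale D_rho_commute[of \<rho> \<sigma>0])

lemma (in prob_space) normal_distributed_diff_parameters:
  assumes "\<sigma>1 > 0" and X: "distributed M lborel X (normal_density \<mu>1 \<sigma>1)"
    and "\<sigma>0 > 0" and Y: "distributed M lborel Y (normal_density \<mu>0 \<sigma>0)"
    and "\<sigma> > 0" and XY: "distributed M lborel (\<lambda>\<omega>. X \<omega> - Y \<omega>) (normal_density \<tau> \<sigma>)"
  shows "\<tau> = \<mu>1 - \<mu>0" and "\<sigma> = D_rho (correlation_of M Y X) \<sigma>1 \<sigma>0"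
proof -
  have [measurable]: "X \<in> borel_measurable M" "Y \<in> borel_measurable M"
    using distributed_measurable[OF X] distributed_measurable[OF Y] by simp_all
  have X2: "integrable M (\<lambda>\<omega>. (X \<omega>)\<^sup>2)" and Y2: "integrable M (\<lambda>\<omega>. (Y \<omega>)\<^sup>2)"
    using normal_distributed_square_integrable \<open>\<sigma>1 > 0\<close> X \<open>\<sigma>0 > 0\<close> Y by blast+
  show "\<tau> = \<mu>1 - \<mu>0"
    using normal_distributed_expectation[OF \<open>\<sigma> > 0\<close> XY] normal_distributed_expectation[OF \<open>\<sigma>1 > 0\<close> X]
      normal_distributed_expectation[OF \<open>\<sigma>0 > 0\<close> Y] X2 Y2
    by (simp add: square_integrable_imp_integrable)
  show "\<sigma> = D_rho (correlation_of M Y X) \<sigma>1 \<sigma>0"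
    using sqrt_variance_of_diff[of X Y] X2 Y2 normal_distributed_variance[OF \<open>\<sigma> > 0\<close> XY]
      normal_distributed_variance[OF \<open>\<sigma>1 > 0\<close> X] normal_distributed_variance[OF \<open>\<sigma>0 > 0\<close> Y]
      \<open>\<sigma> > 0\<close> \<open>\<sigma>1 > 0\<close> \<open>\<sigma>0 > 0\<close>
    by (simp add: variance_of_def)
qed

theorem theorem1:
  fixes M :: "'a measure" and Y1 Y0 :: "'a \<Rightarrow> real"
    and \<rho> mu1hat mu0hat l0 u0 l1 u1 :: real
  assumes "prob_space M"
    and "jointly_gaussian M Y1 Y0"
    and "\<rho> = correlation_of M Y0 Y1"
    and "mu1hat = (LINT \<omega>|M. Y1 \<omega>)"
    and "mu0hat = (LINT \<omega>|M. Y0 \<omega>)"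
    and "l0 \<ge> 0" "u0 \<ge> 0" "l1 \<ge> 0" "u1 \<ge> 0"
    and "measure M {\<omega> \<in> space M. Y1 \<omega> \<le> mu1hat + u1} = 0.95"
    and "measure M {\<omega> \<in> space M. Y1 \<omega> \<ge> mu1hat - l1} = 0.95"
    and "measure M {\<omega> \<in> space M. Y0 \<omega> \<le> mu0hat + u0} = 0.95"
    and "measure M {\<omega> \<in> space M. Y0 \<omega> \<ge> mu0hat - l0} = 0.95"
    and "variance_of M (\<lambda>\<omega>. Y1 \<omega> - Y0 \<omega>) > 0"
  shows "measure M {\<omega> \<in> space M. Y1 \<omega> - Y0 \<omega> \<in> C_ITE \<rho> mu1hat mu0hat l0 u0 l1 u1} = 0.9
     \<and> (\<forall>B \<in> sets borel.
          measure M {\<omega> \<in> space M. Y1 \<omega> - Y0 \<omega> \<in> B} = 0.9 \<longrightarrow>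
            emeasure lborel (C_ITE \<rho> mu1hat mu0hat l0 u0 l1 u1) \<le> emeasure lborel B
          \<and> (emeasure lborel B = emeasure lborel (C_ITE \<rho> mu1hat mu0hat l0 u0 l1 u1) \<longrightarrow>
               emeasure lborel ((B - C_ITE \<rho> mu1hat mu0hat l0 u0 l1 u1)
                                \<union> (C_ITE \<rho> mu1hat mu0hat l0 u0 l1 u1 - B)) = 0))"
proof -
  interpret prob_space M by fact
  have gauss: "gaussian_rv M (\<lambda>\<omega>. a * Y1 \<omega> + b * Y0 \<omega>)" for a b
    using assms(2) by (simp add: jointly_gaussian_def)
  obtain m1 \<sigma>1 where "\<sigma>1 > 0" and Y1: "distributed M lborel Y1 (normal_density m1 \<sigma>1)"
    using gaussian_rv_normal_if_nontrivial_prob[of Y1 "{.. mu1hat + u1}"] gauss[of 1 0] assms(10) by auto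
  obtain m0 \<sigma>0 where "\<sigma>0 > 0" and Y0: "distributed M lborel Y0 (normal_density m0 \<sigma>0)"
    using gaussian_rv_normal_if_nontrivial_prob[of Y0 "{.. mu0hat + u0}"] gauss[of 0 1] assms(12) by auto
  obtain \<tau> \<sigma> where "\<sigma> > 0" and Y: "distributed M lborel (\<lambda>\<omega>. Y1 \<omega> - Y0 \<omega>) (normal_density \<tau> \<sigma>)"
    using gaussian_rv_normal_if_variance_pos gauss[of 1 "-1"] assms(14) by fastforce
  have m1: "m1 = mu1hat" and m0: "m0 = mu0hat"
    using normal_distributed_expectation \<open>\<sigma>1 > 0\<close> Y1 \<open>\<sigma>0 > 0\<close> Y0 assms(4,5) by auto
  note diff = normal_distributed_diff_parameters[OF \<open>\<sigma>1 > 0\<close> Y1 \<open>\<sigma>0 > 0\<close> Y0 \<open>\<sigma> > 0\<close> Y]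
  define z where "z = u1 / \<sigma>1"
  have "z \<ge> 0"
    using assms(9) \<open>\<sigma>1 > 0\<close> by (simp add: z_def)
  have quantile: "std_normal_cdf z = 0.95"
    using normal_distributed_prob_le[OF \<open>\<sigma>1 > 0\<close> Y1, of z] assms(10) m1 \<open>\<sigma>1 > 0\<close> by (simp add: z_def)
  have "C_ITE \<rho> mu1hat mu0hat l0 u0 l1 u1
      = {mu1hat - mu0hat - z * D_rho \<rho> \<sigma>1 \<sigma>0 .. mu1hat - mu0hat + z * D_rho \<rho> \<sigma>1 \<sigma>0}"
  proof (rule C_ITE_eq_symmetric_interval)
    show "z \<ge> 0" by fact
    show "u1 = z * \<sigma>1"
      using \<open>\<sigma>1 > 0\<close> by (simp add: z_def)
    show "l1 = z * \<sigma>1"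
      using normal_distributed_lower_quantile[OF \<open>\<sigma>1 > 0\<close> Y1] assms(11) m1 quantile by simp
    show "u0 = z * \<sigma>0"
      using normal_distributed_upper_quantile[OF \<open>\<sigma>0 > 0\<close> Y0] assms(12) m0 quantile by simp
    show "l0 = z * \<sigma>0"
      using normal_distributed_lower_quantile[OF \<open>\<sigma>0 > 0\<close> Y0] assms(13) m0 quantile by simp
  qed
  then have C: "C_ITE \<rho> mu1hat mu0hat l0 u0 l1 u1 = {\<tau> - z * \<sigma> .. \<tau> + z * \<sigma>}"
    using diff m1 m0 assms(3) by simp
  have coverage: "prob {\<omega> \<in> space M. Y1 \<omega> - Y0 \<omega> \<in> {\<tau> - z * \<sigma> .. \<tau> + z * \<sigma>}} = 0.9"
    using normal_distributed_symmetric_interval_prob[OF \<open>\<sigma> > 0\<close> \<open>z \<ge> 0\<close> Y] quantile by simp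
  show ?thesis
    using coverage normal_distributed_symmetric_interval_minimal_measure[OF \<open>\<sigma> > 0\<close> \<open>z \<ge> 0\<close> Y]
    unfolding C by simp
qed

end
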